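(* Let $\ell\ge1$ be an integer and let $\tau^\ell$ be the $(2\ell+1)\times(2\ell+1)$ matrix defined in the context. Then: (a) $\tau^\ell$ is invertible (indeed unitary); (b) $|\tau^\ell_{0,0}|<1$; (c) Let $v\in\mathbb{C}^{2\ell+1}$ (coordinates indexed by $-\ell,\dots,\ell$) be supported either on $\{-\ell,\dots,-1\}$ or on $\{1,\dots,\ell\}$, and suppose $\tau^\ell v$ is supported either on $\{n\in\{-\ell,\dots,\ell\}: n+\ell \text{ even}\}$ or on $\{n\in\{-\ell,\dots,\ell\}: n+\ell\text{ odd}\}$. Then $v=0$ (and hence $\tau^\ell v=0$). (All four combinations of these support conditions are covered.)
   Context: For $\ell\in\{\tfrac12,1,\tfrac32,2,\dots\}$ and $m,n\in\{-\ell,-\ell+1,\dots,\ell\}$, define $$\tau^\ell_{m,n}=\sqrt{\frac{(\ell-m)!(\ell+m)!}{(\ell-n)!(\ell+n)!}}\;\frac{i^{2\ell}}{2^\ell}\int_{|z|=1}(z+1)^{\ell-n}(z-1)^{\ell+n}z^{m-\ell}\,\frac{dz}{2\pi i z},$$ i.e. the prefactor times the coefficient of $z^{\ell-m}$ in the polynomial $(z+1)^{\ell-n}(z-1)^{\ell+n}$. The matrix $\tau^\ell=(\tau^\ell_{m,n})$, rows indexed by $m$ and columns by $n$ in increasing order from $-\ell$ to $\ell$, is the matrix of the spin-$\ell$ irreducible representation of $SU(2)$ evaluated at $\frac{1}{\sqrt2}\begin{pmatrix} i & i\\ i & -i\end{pmatrix}$, and is unitary. *)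

theory Defs
  imports Complex_Main "HOL-Computational_Algebra.Polynomial"
begin

text \<open>The contour integral in the paper is
  the coefficient of z^(l-m) in (z+1)^(l-n) (z-1)^(l+n).\<close>

definition tau :: "int \<Rightarrow> int \<Rightarrow> int \<Rightarrow> complex" where
  "tau l m n =
     complex_of_real (sqrt ((fact (nat (l - m)) * fact (nat (l + m)))
                          / (fact (nat (l - n)) * fact (nat (l + n)))))
     * (\<i> ^ nat (2 * l) / 2 ^ nat l)
     * coeff ([:1, 1:] ^ nat (l - n) * [:-1, 1:] ^ nat (l + n)) (nat (l - m))"

definition tau_apply :: "int \<Rightarrow> (int \<Rightarrow> complex) \<Rightarrow> int \<Rightarrow> complex" where
  "tau_apply l v m = (\<Sum>n\<in>{-l..l}. tau l m n * v n)"

end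

theory Submission
  imports Defs "HOL-Computational_Algebra.Polynomial_Factorial" "HOL-Computational_Algebra.Field_as_Ring"
begin

text \<open>Write \<open>N = 2l\<close>. On polynomials of degree at most \<open>N\<close> the map
  \<open>q \<mapsto> (z - 1)\<^sup>N q((z + 1)/(z - 1))\<close> squares to \<open>2\<^sup>N\<close>, because the Moebius map
  \<open>z \<mapsto> (z + 1)/(z - 1)\<close> is an involution. In the monomial basis its matrix, conjugated by the
  diagonal weights \<open>sqrt ((l - m)! (l + m)!)\<close> and scaled by \<open>i\<^sup>2\<^sup>l / 2\<^sup>l\<close>, is \<open>\<tau>\<^sup>l\<close>;
  hence \<open>\<tau>\<^sup>l\<close> is its own inverse.
  The entry \<open>\<tau>\<^sup>l\<^sub>0\<^sub>0\<close> is \<open>\<plusminus>2\<^sup>-\<^sup>l\<close> times the middle coefficient of \<open>(z\<^sup>2 - 1)\<^sup>l\<close>, and that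
  coefficient is bounded by the sum of all but one of the binomial coefficients \<open>(l choose k)\<close>.
  For a vector \<open>v\<close> let \<open>f\<close> be the transform of the polynomial encoding \<open>v\<close>; its coefficients
  are, up to nonzero factors, the entries of \<open>\<tau>\<^sup>l v\<close>. If \<open>v\<close> lives on negative indices then
  \<open>(z + 1)\<^sup>l\<^sup>+\<^sup>1\<close> divides \<open>f\<close> (on positive ones, \<open>(z - 1)\<^sup>l\<^sup>+\<^sup>1\<close>), and if \<open>\<tau>\<^sup>l v\<close> lives on
  one parity class then \<open>f\<close> is even or odd, so the reflected factor divides \<open>f\<close> as well.
  Since \<open>deg f \<le> 2l\<close>, this forces \<open>f = 0\<close>, and by invertibility \<open>v = 0\<close>.\<close>

definition cayley_basis :: "nat \<Rightarrow> nat \<Rightarrow> 'a::comm_ring_1 poly" where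
  "cayley_basis N k = [:1, 1:] ^ k * [:-1, 1:] ^ (N - k)"

definition cayley_transform :: "nat \<Rightarrow> 'a::comm_ring_1 poly \<Rightarrow> 'a poly" where
  "cayley_transform N q = (\<Sum>k\<le>N. smult (coeff q k) (cayley_basis N k))"

lemma degree_cayley_basis:
  assumes "k \<le> N"
  shows "degree (cayley_basis N k :: 'a::idom poly) \<le> N"
proof -
  have "degree (cayley_basis N k :: 'a poly)
      \<le> degree ([:1, 1:] ^ k :: 'a poly) + degree ([:-1, 1:] ^ (N - k) :: 'a poly)"
    unfolding cayley_basis_def by (rule degree_mult_le)
  also have "\<dots> \<le> k + (N - k)"
    by (intro add_mono degree_power_le[THEN order_trans]) simp_all
  finally show ?thesis
    using assms by simp
qed

lemma degree_cayley_transform: "degree (cayley_transform N q :: 'a::idom poly) \<le> N"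
  unfolding cayley_transform_def
  by (intro degree_sum_le) (auto intro: order_trans[OF degree_smult_le] degree_cayley_basis)

lemma cayley_transform_smult:
  "cayley_transform N (smult c q) = smult c (cayley_transform N q)"
  by (rule poly_eqI) (simp add: cayley_transform_def coeff_sum sum_distrib_left mult_ac)

lemma cayley_transform_monom:
  assumes "j \<le> N"
  shows "cayley_transform N (monom 1 j) = cayley_basis N j"
proof -
  have "cayley_transform N (monom 1 j) = (\<Sum>k\<le>N. if k = j then cayley_basis N k else 0)"
    unfolding cayley_transform_def by (rule sum.cong) (auto simp: coeff_monom)
  with assms show ?thesis by simp
qed

lemma poly_cayley_transform:
  fixes q :: "'a::field poly"
  assumes "degree q \<le> N" "z \<noteq> 1"
  shows "poly (cayley_transform N q) z = (z - 1) ^ N * poly q ((z + 1) / (z - 1))"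
proof -
  have "poly (cayley_transform N q) z = (\<Sum>k\<le>N. coeff q k * ((z + 1) ^ k * (z - 1) ^ (N - k)))"
    by (simp add: cayley_transform_def cayley_basis_def poly_sum add_ac)
  also have "\<dots> = (\<Sum>k\<le>N. (z - 1) ^ N * (coeff q k * ((z + 1) / (z - 1)) ^ k))"
  proof (rule sum.cong[OF refl])
    fix k assume "k \<in> {..N}"
    then have "(z - 1) ^ N = (z - 1) ^ k * (z - 1) ^ (N - k)"
      by (simp flip: power_add)
    with assms(2) show "coeff q k * ((z + 1) ^ k * (z - 1) ^ (N - k))
        = (z - 1) ^ N * (coeff q k * ((z + 1) / (z - 1)) ^ k)"
      by (simp add: power_divide field_simps)
  qed
  also have "\<dots> = (z - 1) ^ N * (\<Sum>k\<le>N. coeff q k * ((z + 1) / (z - 1)) ^ k)"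
    by (simp add: sum_distrib_left)
  also have "(\<Sum>k\<le>N. coeff q k * ((z + 1) / (z - 1)) ^ k) = poly q ((z + 1) / (z - 1))"
    unfolding poly_altdef using assms(1)
    by (intro sum.mono_neutral_right) (auto simp: coeff_eq_0)
  finally show ?thesis .
qed

lemma cayley_transform_involution:
  fixes q :: "'a::field_char_0 poly"
  assumes "degree q \<le> N"
  shows "cayley_transform N (cayley_transform N q) = smult (2 ^ N) q"
proof -
  have "poly (cayley_transform N (cayley_transform N q)) z = poly (smult (2 ^ N) q) z"
    if "z \<noteq> 1" for z
  proof -
    define w where "w = (z + 1) / (z - 1)"
    have "w \<noteq> 1"
      using that by (simp add: w_def field_simps)
    have "poly (cayley_transform N (cayley_transform N q)) z
        = (z - 1) ^ N * poly (cayley_transform N q) w"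
      unfolding w_def by (rule poly_cayley_transform[OF degree_cayley_transform that])
    also have "poly (cayley_transform N q) w = (w - 1) ^ N * poly q ((w + 1) / (w - 1))"
      by (rule poly_cayley_transform[OF assms \<open>w \<noteq> 1\<close>])
    also have "(w + 1) / (w - 1) = z"
      using that by (simp add: w_def field_simps)
    finally have "poly (cayley_transform N (cayley_transform N q)) z
        = ((z - 1) * (w - 1)) ^ N * poly q z"
      by (simp add: power_mult_distrib)
    also have "(z - 1) * (w - 1) = 2"
      using that by (simp add: w_def field_simps)
    finally show ?thesis by simp
  qed
  then have roots: "UNIV - {1} \<subseteq> {z. poly (cayley_transform N (cayley_transform N q) - smult (2 ^ N) q) z = 0}"
    by auto
  show ?thesis
  proof (rule ccontr)
    assume "\<not> ?thesis"
    then have "finite {z. poly (cayley_transform N (cayley_transform N q) - smult (2 ^ N) q) z = 0}"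
      by (intro poly_roots_finite) simp
    with roots have "finite (UNIV - {1 :: 'a})"
      by (rule finite_subset)
    then show False
      by (simp add: infinite_UNIV_char_0)
  qed
qed

lemma plus_one_power_dvd_cayley_transform:
  assumes "\<And>i. i < k \<Longrightarrow> coeff q i = 0"
  shows "[:1, 1:] ^ k dvd cayley_transform N q"
  unfolding cayley_transform_def
proof (intro dvd_sum)
  fix i show "[:1, 1:] ^ k dvd smult (coeff q i) (cayley_basis N i)"
  proof (cases "i < k")
    case False
    then have "[:1, 1:] ^ k dvd ([:1, 1:] ^ i :: 'a poly)"
      by (simp add: le_imp_power_dvd)
    then show ?thesis by (simp add: cayley_basis_def dvd_smult)
  qed (simp add: assms)
qed

lemma minus_one_power_dvd_cayley_transform:
  assumes "\<And>i. N < i + k \<Longrightarrow> coeff q i = 0"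
  shows "[:-1, 1:] ^ k dvd cayley_transform N q"
  unfolding cayley_transform_def
proof (intro dvd_sum)
  fix i show "[:-1, 1:] ^ k dvd smult (coeff q i) (cayley_basis N i)"
  proof (cases "N < i + k")
    case False
    then have "[:-1, 1:] ^ k dvd ([:-1, 1:] ^ (N - i) :: 'a poly)"
      by (simp add: le_imp_power_dvd)
    then show ?thesis by (simp add: cayley_basis_def dvd_smult)
  qed (simp add: assms)
qed

lemma pcompose_power: "pcompose (p ^ n) r = pcompose p r ^ n"
  by (induction n) (simp_all add: pcompose_1 pcompose_mult)

lemma pcompose_uminus_x_eq_self:
  fixes f :: "'a::comm_ring_1 poly"
  assumes "\<And>i. odd i \<Longrightarrow> coeff f i = 0"
  shows "pcompose f [:0, -1:] = f"
proof (rule poly_eqI)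
  fix i show "coeff (pcompose f [:0, -1:]) i = coeff f i"
    by (cases "even i") (auto simp: coeff_pcompose_linear assms)
qed

lemma pcompose_uminus_x_eq_uminus:
  fixes f :: "'a::comm_ring_1 poly"
  assumes "\<And>i. even i \<Longrightarrow> coeff f i = 0"
  shows "pcompose f [:0, -1:] = - f"
proof (rule poly_eqI)
  fix i show "coeff (pcompose f [:0, -1:]) i = coeff (- f) i"
    by (cases "even i") (auto simp: coeff_pcompose_linear assms)
qed

lemma even_or_odd_poly_eq_0:
  fixes f :: "complex poly"
  assumes parity: "pcompose f [:0, -1:] = f \<or> pcompose f [:0, -1:] = - f"
    and dvd: "[:c, 1:] ^ k dvd f" and "c \<noteq> 0" and deg: "degree f < 2 * k"
  shows "f = 0"
proof (rule ccontr)
  assume "f \<noteq> 0"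
  obtain g where f: "f = [:c, 1:] ^ k * g"
    using dvd by blast
  have reflect: "pcompose [:c, 1:] [:0, -1:] = - [:-c, 1:]"
    by (simp add: pcompose_pCons)
  have "[:-c, 1:] ^ k dvd pcompose f [:0, -1:]"
    unfolding f pcompose_mult pcompose_power reflect power_minus[of "[:-c, 1:]"]
    by (intro dvd_mult2 dvd_mult dvd_refl)
  then have "[:-c, 1:] ^ k dvd f"
    using parity by (elim disjE) simp_all
  moreover have "coprime ([:c, 1:] ^ k) ([:-c, 1:] ^ k)"
  proof -
    have unit: "is_unit ([:c, 1:] - [:-c, 1:])"
      using \<open>c \<noteq> 0\<close> by (simp add: is_unit_triv)
    have "coprime [:c, 1:] [:-c, 1:]"
    proof (rule coprimeI)
      fix d assume "d dvd [:c, 1:]" "d dvd [:-c, 1:]"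
      then have "d dvd [:c, 1:] - [:-c, 1:]"
        by (rule dvd_diff)
      then show "is_unit d"
        using unit by (rule dvd_unit_imp_unit)
    qed
    then show ?thesis by simp
  qed
  ultimately have "[:c, 1:] ^ k * [:-c, 1:] ^ k dvd f"
    using dvd by (simp add: divides_mult)
  then have "degree ([:c, 1:] ^ k * [:-c, 1:] ^ k) \<le> degree f"
    using \<open>f \<noteq> 0\<close> by (rule dvd_imp_degree_le)
  with deg show False
    by (simp add: degree_mult_eq degree_linear_power)
qed

definition tau_weight :: "int \<Rightarrow> int \<Rightarrow> real" where
  "tau_weight l m = sqrt (fact (nat (l - m)) * fact (nat (l + m)))"

definition tau_scalar :: "int \<Rightarrow> complex" where
  "tau_scalar l = (-1) ^ nat l / 2 ^ nat l"

lemma tau_weight_pos: "tau_weight l m > 0"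
  by (simp add: tau_weight_def)

lemma tau_eq_cayley_basis:
  assumes "l \<ge> 0" "m \<in> {-l..l}" "n \<in> {-l..l}"
  shows "tau l m n = of_real (tau_weight l m / tau_weight l n) * tau_scalar l
           * coeff (cayley_basis (nat (2 * l)) (nat (l - n))) (nat (l - m))"
proof -
  have "nat (l + n) = nat (2 * l) - nat (l - n)" "nat (2 * l) = 2 * nat l"
    using assms by auto
  then show ?thesis
    by (simp add: tau_def tau_weight_def tau_scalar_def cayley_basis_def real_sqrt_divide power_mult)
qed

lemma tau_scalar_square:
  assumes "l \<ge> 0"
  shows "tau_scalar l * tau_scalar l * 2 ^ nat (2 * l) = 1"
proof -
  have "nat (2 * l) = nat l + nat l"
    using assms by simp
  then show ?thesis
    by (simp add: tau_scalar_def power_add flip: power_mult_distrib)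
qed

lemma sum_int_interval_reindex:
  fixes l :: int
  assumes "l \<ge> 0"
  shows "(\<Sum>k\<in>{-l..l}. g k) = (\<Sum>j\<le>nat (2 * l). g (l - int j))"
proof -
  have "{-l..l} = (\<lambda>j. l - int j) ` {..nat (2 * l)}"
  proof
    show "{-l..l} \<subseteq> (\<lambda>j. l - int j) ` {..nat (2 * l)}"
    proof
      fix k assume "k \<in> {-l..l}"
      then have "k = l - int (nat (l - k))" "nat (l - k) \<in> {..nat (2 * l)}"
        by auto
      then show "k \<in> (\<lambda>j. l - int j) ` {..nat (2 * l)}"
        by blast
    qed
  qed (use assms in auto)
  moreover have "inj_on (\<lambda>j. l - int j) {..nat (2 * l)}"
    by (auto simp: inj_on_def)
  ultimately show ?thesis
    by (simp add: sum.reindex)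
qed

definition vec_poly :: "int \<Rightarrow> (int \<Rightarrow> complex) \<Rightarrow> complex poly" where
  "vec_poly l v = (\<Sum>j\<le>nat (2 * l). monom (v (l - int j) / of_real (tau_weight l (l - int j))) j)"

lemma coeff_vec_poly:
  "coeff (vec_poly l v) j =
     (if j \<le> nat (2 * l) then v (l - int j) / of_real (tau_weight l (l - int j)) else 0)"
  by (simp add: vec_poly_def coeff_sum coeff_monom)

lemma degree_vec_poly: "degree (vec_poly l v) \<le> nat (2 * l)"
  by (rule degree_le) (simp add: coeff_vec_poly)

lemma tau_apply_eq_cayley_transform:
  assumes "l \<ge> 0" "m \<in> {-l..l}"
  shows "tau_apply l v m = of_real (tau_weight l m) * tau_scalar l
           * coeff (cayley_transform (nat (2 * l)) (vec_poly l v)) (nat (l - m))"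
proof -
  let ?N = "nat (2 * l)" and ?c = "of_real (tau_weight l m) * tau_scalar l"
  have "tau_apply l v m = (\<Sum>j\<le>?N. tau l m (l - int j) * v (l - int j))"
    unfolding tau_apply_def by (rule sum_int_interval_reindex[OF assms(1)])
  also have "\<dots> = (\<Sum>j\<le>?N. ?c * (coeff (vec_poly l v) j * coeff (cayley_basis ?N j) (nat (l - m))))"
  proof (rule sum.cong[OF refl])
    fix j assume "j \<in> {..?N}"
    then have j: "l - int j \<in> {-l..l}" "nat (l - (l - int j)) = j"
      using assms(1) by auto
    have "tau_weight l (l - int j) \<noteq> 0"
      using tau_weight_pos[of l "l - int j"] by simp
    then show "tau l m (l - int j) * v (l - int j)
        = ?c * (coeff (vec_poly l v) j * coeff (cayley_basis ?N j) (nat (l - m)))"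
      using \<open>j \<in> {..?N}\<close> tau_eq_cayley_basis[OF assms j(1)]
      by (simp add: coeff_vec_poly j(2) field_simps)
  qed
  also have "\<dots> = ?c * coeff (cayley_transform ?N (vec_poly l v)) (nat (l - m))"
    by (simp add: cayley_transform_def coeff_sum sum_distrib_left)
  finally show ?thesis .
qed

lemma vec_poly_tau_column:
  assumes "l \<ge> 0" "n \<in> {-l..l}"
  shows "vec_poly l (\<lambda>k. tau l k n)
    = smult (tau_scalar l / of_real (tau_weight l n)) (cayley_basis (nat (2 * l)) (nat (l - n)))"
proof (rule poly_eqI)
  fix j
  let ?B = "cayley_basis (nat (2 * l)) (nat (l - n)) :: complex poly"
  show "coeff (vec_poly l (\<lambda>k. tau l k n)) j = coeff (smult (tau_scalar l / of_real (tau_weight l n)) ?B) j"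
  proof (cases "j \<le> nat (2 * l)")
    case True
    then have j: "l - int j \<in> {-l..l}" "nat (l - (l - int j)) = j"
      using assms(1) by auto
    have "tau_weight l (l - int j) \<noteq> 0"
      using tau_weight_pos[of l "l - int j"] by simp
    then show ?thesis
      using True tau_eq_cayley_basis[OF assms(1) j(1) assms(2)]
      by (simp add: coeff_vec_poly j(2) field_simps)
  next
    case False
    then have "coeff ?B j = 0"
      using assms by (intro coeff_eq_0 le_less_trans[OF degree_cayley_basis]) auto
    with False show ?thesis
      by (simp add: coeff_vec_poly)
  qed
qed

lemma tau_mult_tau:
  assumes "l \<ge> 0" "m \<in> {-l..l}" "n \<in> {-l..l}"
  shows "(\<Sum>k\<in>{-l..l}. tau l m k * tau l k n) = (if m = n then 1 else 0)"
proof -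
  let ?N = "nat (2 * l)"
  have "nat (l - n) \<le> ?N"
    using assms by auto
  then have "degree (monom (1 :: complex) (nat (l - n))) \<le> ?N"
    by (simp add: degree_monom_eq)
  then have "cayley_transform ?N (vec_poly l (\<lambda>k. tau l k n))
      = smult (tau_scalar l / of_real (tau_weight l n) * 2 ^ ?N) (monom 1 (nat (l - n)))"
    using \<open>nat (l - n) \<le> ?N\<close>
    by (simp add: vec_poly_tau_column[OF assms(1,3)] cayley_transform_smult
        cayley_transform_involution flip: cayley_transform_monom)
  moreover have "(nat (l - m) = nat (l - n)) = (m = n)"
    using assms by auto
  moreover have "tau_weight l n \<noteq> 0"
    using tau_weight_pos[of l n] by simp
  ultimately show ?thesis
    using tau_apply_eq_cayley_transform[OF assms(1,2), of "\<lambda>k. tau l k n"] tau_scalar_square[OF assms(1)]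
    by (auto simp: tau_apply_def coeff_monom field_simps)
qed

lemma coeff_square_minus_one_power:
  assumes "L > 0"
  shows "coeff ([:1, 1:] ^ L * [:-1, 1:] ^ L :: complex poly) L
     = (\<Sum>k<L. if 2 * k = L then of_nat (L choose k) * (-1) ^ (L - k) else 0)"
proof -
  have "([:1, 1:] * [:-1, 1:] :: complex poly) = monom 1 2 + [:-1:]"
    by (simp add: monom_altdef power2_eq_square)
  then have "[:1, 1:] ^ L * [:-1, 1:] ^ L = (monom 1 2 + [:-1:] :: complex poly) ^ L"
    by (simp flip: power_mult_distrib)
  also have "\<dots> = (\<Sum>k\<le>L. monom (of_nat (L choose k) * (-1) ^ (L - k)) (2 * k))"
    by (simp add: binomial_ring monom_power poly_const_pow of_nat_poly smult_monom
        flip: smult_monom mult_smult_left)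
      (simp add: smult_monom mult.commute)
  finally have "[:1, 1:] ^ L * [:-1, 1:] ^ L
      = (\<Sum>k\<le>L. monom (of_nat (L choose k) * (-1) ^ (L - k) :: complex) (2 * k))" .
  then have "coeff ([:1, 1:] ^ L * [:-1, 1:] ^ L :: complex poly) L
      = (\<Sum>k<Suc L. if 2 * k = L then of_nat (L choose k) * (-1) ^ (L - k) else 0)"
    by (simp add: coeff_sum coeff_monom lessThan_Suc_atMost eq_commute)
  with assms show ?thesis
    by simp
qed

lemma norm_coeff_square_minus_one_power_le:
  assumes "L > 0"
  shows "cmod (coeff ([:1, 1:] ^ L * [:-1, 1:] ^ L :: complex poly) L) \<le> 2 ^ L - 1"
proof -
  have "cmod (coeff ([:1, 1:] ^ L * [:-1, 1:] ^ L :: complex poly) L) \<le> (\<Sum>k<L. real (L choose k))"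
    unfolding coeff_square_minus_one_power[OF assms]
    by (rule order_trans[OF norm_sum sum_mono]) (simp add: norm_mult norm_power)
  also have "(\<Sum>k<L. real (L choose k)) = 2 ^ L - 1"
  proof -
    have "(\<Sum>k<L. L choose k) + 1 = 2 ^ L"
      using choose_row_sum[of L] by (simp flip: lessThan_Suc_atMost)
    then have "real ((\<Sum>k<L. L choose k) + 1) = real (2 ^ L)"
      by (rule arg_cong)
    then show ?thesis
      by simp
  qed
  finally show ?thesis .
qed

lemma norm_tau_0_0_less_1:
  assumes "l \<ge> 1"
  shows "cmod (tau l 0 0) < 1"
proof -
  have "nat (2 * l) - nat l = nat l" "(0 :: int) \<in> {-l..l}"
    using assms by auto
  then have "tau l 0 0 = tau_scalar l * coeff ([:1, 1:] ^ nat l * [:-1, 1:] ^ nat l) (nat l)"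
    using tau_eq_cayley_basis[of l 0 0] assms tau_weight_pos[of l 0]
    by (simp add: cayley_basis_def)
  then have "cmod (tau l 0 0) \<le> (2 ^ nat l - 1) / 2 ^ nat l"
    using norm_coeff_square_minus_one_power_le[of "nat l"] assms
    by (simp add: tau_scalar_def norm_mult norm_divide norm_power divide_right_mono)
  also have "\<dots> < 1"
    by simp
  finally show ?thesis .
qed

lemma cayley_transform_eq_0_iff:
  fixes q :: "'a::field_char_0 poly"
  assumes "degree q \<le> N"
  shows "cayley_transform N q = 0 \<longleftrightarrow> q = 0"
  using cayley_transform_involution[OF assms] by (auto simp: cayley_transform_def)

lemma vec_poly_eq_0_imp:
  assumes "vec_poly l v = 0" "n \<in> {-l..l}"
  shows "v n = 0"
proof -
  have "nat (l - n) \<le> nat (2 * l)"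
    using assms(2) by (intro nat_mono) simp
  then show ?thesis
    using arg_cong[OF assms(1), of "\<lambda>p. coeff p (nat (l - n))"] assms(2) tau_weight_pos[of l n]
    by (simp add: coeff_vec_poly)
qed

lemma tau_apply_eq_0_iff:
  assumes "l \<ge> 0" "m \<in> {-l..l}"
  shows "tau_apply l v m = 0
    \<longleftrightarrow> coeff (cayley_transform (nat (2 * l)) (vec_poly l v)) (nat (l - m)) = 0"
  using tau_apply_eq_cayley_transform[OF assms, of v] tau_weight_pos[of l m]
  by (simp add: tau_scalar_def)

lemma cayley_transform_vec_poly_even_or_odd:
  assumes "l \<ge> 0"
    and parity: "(\<forall>m\<in>{-l..l}. \<not> even (m + l) \<longrightarrow> tau_apply l v m = 0) \<or>
                 (\<forall>m\<in>{-l..l}. \<not> odd (m + l) \<longrightarrow> tau_apply l v m = 0)"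
  defines "f \<equiv> cayley_transform (nat (2 * l)) (vec_poly l v)"
  shows "pcompose f [:0, -1:] = f \<or> pcompose f [:0, -1:] = - f"
proof -
  have coeff_f: "coeff f j = 0" if "j \<le> nat (2 * l) \<Longrightarrow> tau_apply l v (l - int j) = 0" for j
  proof (cases "j \<le> nat (2 * l)")
    case True
    then have "l - int j \<in> {-l..l}" "nat (l - (l - int j)) = j"
      using assms(1) by auto
    with True that show ?thesis
      using tau_apply_eq_0_iff[OF assms(1), of "l - int j" v] by (simp add: f_def)
  next
    case False
    then show ?thesis
      using degree_cayley_transform[of "nat (2 * l)" "vec_poly l v"] by (simp add: f_def coeff_eq_0)
  qed
  have "l - int j \<in> {-l..l}" "even (l - int j + l) = even j" if "j \<le> nat (2 * l)" for j
    using that assms(1) by auto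
  with parity show ?thesis
    by (auto intro!: pcompose_uminus_x_eq_self pcompose_uminus_x_eq_uminus coeff_f)
qed

lemma cayley_transform_vec_poly_dvd:
  assumes "l \<ge> 0"
    and supp: "(\<forall>n\<in>{-l..l}. n \<notin> {-l..-1} \<longrightarrow> v n = 0) \<or> (\<forall>n\<in>{-l..l}. n \<notin> {1..l} \<longrightarrow> v n = 0)"
  obtains c where "c \<noteq> 0" "[:c, 1:] ^ (nat l + 1) dvd cayley_transform (nat (2 * l)) (vec_poly l v)"
  using supp
proof
  assume "\<forall>n\<in>{-l..l}. n \<notin> {-l..-1} \<longrightarrow> v n = 0"
  then have "coeff (vec_poly l v) j = 0" if "j < nat l + 1" for j
    using that assms(1) by (auto simp: coeff_vec_poly)
  then have "[:1, 1:] ^ (nat l + 1) dvd cayley_transform (nat (2 * l)) (vec_poly l v)"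
    by (rule plus_one_power_dvd_cayley_transform)
  then show thesis
    by (rule that[rotated]) simp
next
  assume "\<forall>n\<in>{-l..l}. n \<notin> {1..l} \<longrightarrow> v n = 0"
  then have "coeff (vec_poly l v) j = 0" if "nat (2 * l) < j + (nat l + 1)" for j
    using that assms(1) by (auto simp: coeff_vec_poly)
  then have "[:-1, 1:] ^ (nat l + 1) dvd cayley_transform (nat (2 * l)) (vec_poly l v)"
    by (rule minus_one_power_dvd_cayley_transform)
  then show thesis
    by (rule that[rotated]) simp
qed

lemma tau_apply_support_parity_eq_0:
  assumes "l \<ge> 1"
    and supp: "(\<forall>n\<in>{-l..l}. n \<notin> {-l..-1} \<longrightarrow> v n = 0) \<or> (\<forall>n\<in>{-l..l}. n \<notin> {1..l} \<longrightarrow> v n = 0)"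
    and parity: "(\<forall>m\<in>{-l..l}. \<not> even (m + l) \<longrightarrow> tau_apply l v m = 0) \<or>
                 (\<forall>m\<in>{-l..l}. \<not> odd (m + l) \<longrightarrow> tau_apply l v m = 0)"
    and "n \<in> {-l..l}"
  shows "v n = 0"
proof -
  have "l \<ge> 0"
    using assms(1) by simp
  obtain c where c: "c \<noteq> 0"
    and dvd: "[:c, 1:] ^ (nat l + 1) dvd cayley_transform (nat (2 * l)) (vec_poly l v)"
    using cayley_transform_vec_poly_dvd[OF \<open>l \<ge> 0\<close> supp] .
  have "degree (cayley_transform (nat (2 * l)) (vec_poly l v)) < 2 * (nat l + 1)"
    using degree_cayley_transform[of "nat (2 * l)" "vec_poly l v"] \<open>l \<ge> 0\<close> by simp
  then have "cayley_transform (nat (2 * l)) (vec_poly l v) = 0"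
    by (rule even_or_odd_poly_eq_0[OF cayley_transform_vec_poly_even_or_odd[OF \<open>l \<ge> 0\<close> parity] dvd c])
  then have "vec_poly l v = 0"
    by (simp add: cayley_transform_eq_0_iff degree_vec_poly)
  then show ?thesis
    using \<open>n \<in> {-l..l}\<close> by (rule vec_poly_eq_0_imp)
qed

theorem mainTheorem9:
  fixes l :: int
  assumes "l \<ge> 1"
  shows "(\<exists>sigma :: int \<Rightarrow> int \<Rightarrow> complex.
            (\<forall>m\<in>{-l..l}. \<forall>n\<in>{-l..l}.
               (\<Sum>k\<in>{-l..l}. tau l m k * sigma k n) = (if m = n then 1 else 0)) \<and>
            (\<forall>m\<in>{-l..l}. \<forall>n\<in>{-l..l}.
               (\<Sum>k\<in>{-l..l}. sigma m k * tau l k n) = (if m = n then 1 else 0)))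
       \<and> cmod (tau l 0 0) < 1
       \<and> (\<forall>v :: int \<Rightarrow> complex.
            ((\<forall>n\<in>{-l..l}. n \<notin> {-l..-1} \<longrightarrow> v n = 0) \<or>
             (\<forall>n\<in>{-l..l}. n \<notin> {1..l} \<longrightarrow> v n = 0)) \<and>
            ((\<forall>m\<in>{-l..l}. \<not> even (m + l) \<longrightarrow> tau_apply l v m = 0) \<or>
             (\<forall>m\<in>{-l..l}. \<not> odd (m + l) \<longrightarrow> tau_apply l v m = 0))
            \<longrightarrow> (\<forall>n\<in>{-l..l}. v n = 0))"
proof -
  have "l \<ge> 0"
    using assms by simp
  have "\<exists>sigma :: int \<Rightarrow> int \<Rightarrow> complex.
          (\<forall>m\<in>{-l..l}. \<forall>n\<in>{-l..l}.
             (\<Sum>k\<in>{-l..l}. tau l m k * sigma k n) = (if m = n then 1 else 0)) \<and>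
          (\<forall>m\<in>{-l..l}. \<forall>n\<in>{-l..l}.
             (\<Sum>k\<in>{-l..l}. sigma m k * tau l k n) = (if m = n then 1 else 0))"
    by (intro exI[of _ "tau l"]) (simp add: tau_mult_tau[OF \<open>l \<ge> 0\<close>])
  then show ?thesis
    using norm_tau_0_0_less_1[OF assms] tau_apply_support_parity_eq_0[OF assms] by blast
qed

end
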